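(* Let $N\ge 1$ users and a server run the LightSecAgg protocol described in the context, with integer parameters $T\ge 0$ (privacy guarantee) and $D\ge 0$ (dropout-resiliency guarantee) satisfying $T+D<N$, and with the design parameter $U$ being any integer with $T<U\le N-D$. Then LightSecAgg simultaneously achieves (1) privacy against any set of up to $T$ colluding users (who may also collude with the server), and (2) dropout-resiliency against any set of up to $D$ dropped users, in the sense defined in the context.
   Context: Setting: there are $N$ users, indexed by $[N]=\{1,\dots,N\}$, and a server. User $i$ holds a local model $\mathbf{x}_i\in\mathbb{F}_q^d$ for a finite field $\mathbb{F}_q$; the $\mathbf{x}_i$ are independent of all randomness generated by the protocol. Users communicate with each other through private, authenticated channels (the server does not see user-to-user messages). Assume $U-T$ divides $d$. A matrix $W\in\mathbb{F}_q^{U\times N}$ is MDS if every $U\times U$ submatrix is invertible; it is $T$-private MDS if in addition the submatrix consisting of its rows $U-T+1,\dots,U$ is MDS (every $T\times T$ submatrix of it is invertible). Such matrices exist for all $U,N,T$ (for $q$ large enough). Let $W_j$ denote the $j$-th column of a fixed $T$-private MDS matrix $W$. LightSecAgg protocol with parameters $T,D,U$ ($N-D\ge U>T\ge0$): (i) Offline encoding and sharing of masks: each user $i$ independently picks $\mathbf{z}_i$ uniformly at random from $\mathbb{F}_q^d$, partitions it into $U-T$ sub-masks $[\mathbf{z}_i]_1,\dots,[\mathbf{z}_i]_{U-T}\in\mathbb{F}_q^{d/(U-T)}$, picks $[\mathbf{n}_i]_{U-T+1},\dots,[\mathbf{n}_i]_U$ independently and uniformly at random from $\mathbb{F}_q^{d/(U-T)}$,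 and computes for each $j\in[N]$ the encoded mask $[\tilde{\mathbf{z}}_i]_j=([\mathbf{z}_i]_1,\dots,[\mathbf{z}_i]_{U-T},[\mathbf{n}_i]_{U-T+1},\dots,[\mathbf{n}_i]_U)\cdot W_j$ (each coordinate of the vectors combined linearly with the entries of $W_j$). User $i$ sends $[\tilde{\mathbf{z}}_i]_j$ to user $j$ for each $j\ne i$. (ii) Masking and uploading: each user $i$ sends $\tilde{\mathbf{x}}_i=\mathbf{x}_i+\mathbf{z}_i$ to the server. The server identifies the set $\mathcal{U}_1\subseteq[N]$ of users whose masked models it received (surviving users). (iii) One-shot aggregate-model recovery: each surviving user $j\in\mathcal{U}_1$ sends $\sum_{i\in\mathcal{U}_1}[\tilde{\mathbf{z}}_i]_j$ to the server; after receiving any $U$ of these messages, the server decodes (using $W$) $\sum_{i\in\mathcal{U}_1}[\mathbf{z}_i]_k$ for $k\in[U-T]$, concatenates them into $\sum_{i\in\mathcal{U}_1}\mathbf{z}_i$, and outputs $\sum_{i\in\mathcal{U}_1}\tilde{\mathbf{x}}_i-\sum_{i\in\mathcal{U}_1}\mathbf{z}_i$. Privacy guarantee $T$: for every set $\mathcal{T}\subseteq[N]$ with $|\mathcal{T}|\le T$, $I\big(\{\mathbf{x}_i\}_{i\in[N]};\mathbf{Y}\,\big|\,\sum_{i\in\mathcal{U}_1}\mathbf{x}_i,\mathbf{Z}_{\mathcal{T}}\big)=0$, where $\mathbf{Y}$ is the collection of all messages received by the server (in the worst case where users deemed dropped are merely delayed, so the server receives all masked models), and $\mathbf{Z}_{\mathcal{T}}$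 is the collection of all information held by the users in $\mathcal{T}$ (their models, masks and received encoded masks). Dropout-resiliency guarantee $D$: if at most $D$ users drop at any point during execution, the server correctly recovers $\sum_{i\in\mathcal{U}_1}\mathbf{x}_i$, the sum of the surviving users' models. *)

theory Defs
  imports "Jordan_Normal_Form.DL_Submatrix" "HOL-Probability.Probability_Mass_Function"
          "HOL-Library.FuncSet"
begin

text \<open>Conventions (0-based indexing): users are 0..N-1, rows of W are 0..U-1,
  the "noise" rows of the paper (U-T+1..U) are U-T..U-1, vector coordinates of
  F_q^d are 0..d-1, and sub-mask k (paper: k+1) of z occupies coordinates
  k*m .. k*m+m-1 with m = d div (U-T).\<close>

definition MDS_mat :: "'a::field mat \<Rightarrow> nat \<Rightarrow> nat \<Rightarrow> bool" where
  "MDS_mat W U N \<longleftrightarrow> W \<in> carrier_mat U N \<and>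
     (\<forall>S. S \<subseteq> {..<N} \<longrightarrow> card S = U \<longrightarrow> invertible_mat (submatrix W {..<U} S))"

definition T_private_MDS :: "'a::field mat \<Rightarrow> nat \<Rightarrow> nat \<Rightarrow> nat \<Rightarrow> bool" where
  "T_private_MDS W U N T \<longleftrightarrow> MDS_mat W U N \<and> T \<le> U \<and>
     (\<forall>S. S \<subseteq> {..<N} \<longrightarrow> card S = T \<longrightarrow> invertible_mat (submatrix W {U-T..<U} S))"

definition cond_mutual_info ::
  "'o pmf \<Rightarrow> ('o \<Rightarrow> 'x) \<Rightarrow> ('o \<Rightarrow> 'y) \<Rightarrow> ('o \<Rightarrow> 'z) \<Rightarrow> real" where
  "cond_mutual_info M X Y Z =
     (\<Sum>(x,y,z) \<in> (\<lambda>\<omega>. (X \<omega>, Y \<omega>, Z \<omega>)) ` set_pmf M.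
        let pxyz = pmf (map_pmf (\<lambda>\<omega>. (X \<omega>, Y \<omega>, Z \<omega>)) M) (x,y,z);
            pz   = pmf (map_pmf Z M) z;
            pxz  = pmf (map_pmf (\<lambda>\<omega>. (X \<omega>, Z \<omega>)) M) (x,z);
            pyz  = pmf (map_pmf (\<lambda>\<omega>. (Y \<omega>, Z \<omega>)) M) (y,z)
        in pxyz * log 2 ((pxyz * pz) / (pxz * pyz)))"

type_synonym 'a fvec = "nat \<Rightarrow> 'a"          \<comment> \<open>vector, meaningful coordinates < length\<close>

definition fvecs :: "nat \<Rightarrow> 'a fvec set" where
  "fvecs n = PiE {..<n} (\<lambda>_. UNIV)"

definition sublen :: "nat \<Rightarrow> nat \<Rightarrow> nat \<Rightarrow> nat" where
  "sublen d U T = d div (U - T)"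

text \<open>Coefficient vector ([z]_1,...,[z]_{U-T},[n]_{U-T+1},...,[n]_U), as a function of
  block index k < U and in-block coordinate l < m.\<close>
definition coeff :: "nat \<Rightarrow> nat \<Rightarrow> nat \<Rightarrow> 'a fvec \<Rightarrow> (nat \<Rightarrow> 'a fvec) \<Rightarrow> nat \<Rightarrow> nat \<Rightarrow> 'a" where
  "coeff d U T z n k l = (if k < U - T then z (k * sublen d U T + l) else n k l)"

text \<open>Encoded mask [z~_i]_j of a user with mask z and noise n, sent to user j.\<close>
definition enc_mask ::
  "'a::field mat \<Rightarrow> nat \<Rightarrow> nat \<Rightarrow> nat \<Rightarrow> 'a fvec \<Rightarrow> (nat \<Rightarrow> 'a fvec) \<Rightarrow> nat \<Rightarrow> 'a fvec" where
  "enc_mask W d U T z n j = (\<lambda>l\<in>{..<sublen d U T}. \<Sum>k<U. coeff d U T z n k l * W $$ (k, j))"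

definition masks_space :: "nat \<Rightarrow> nat \<Rightarrow> ('a fvec) fvec set" where
  "masks_space N d = PiE {..<N} (\<lambda>_. fvecs d)"

definition noise_space :: "nat \<Rightarrow> nat \<Rightarrow> nat \<Rightarrow> nat \<Rightarrow> (nat \<Rightarrow> nat \<Rightarrow> 'a fvec) set" where
  "noise_space N d U T = PiE {..<N} (\<lambda>_. PiE {U-T..<U} (\<lambda>_. fvecs (sublen d U T)))"

definition rand_pmf :: "nat \<Rightarrow> nat \<Rightarrow> nat \<Rightarrow> nat \<Rightarrow>
    (('a::finite) fvec fvec \<times> (nat \<Rightarrow> nat \<Rightarrow> 'a fvec)) pmf" where
  "rand_pmf N d U T = pair_pmf (pmf_of_set (masks_space N d)) (pmf_of_set (noise_space N d U T))"

text \<open>Message of phase (iii) from surviving user j: sum over i \<in> U1 of [z~_i]_j.\<close>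
definition agg_msg ::
  "'a::field mat \<Rightarrow> nat \<Rightarrow> nat \<Rightarrow> nat \<Rightarrow> nat set \<Rightarrow> 'a fvec fvec \<Rightarrow> (nat \<Rightarrow> nat \<Rightarrow> 'a fvec)
     \<Rightarrow> nat \<Rightarrow> 'a fvec" where
  "agg_msg W d U T U1 zs ns j =
     (\<lambda>l\<in>{..<sublen d U T}. \<Sum>i\<in>U1. enc_mask W d U T (zs i) (ns i) j l)"

definition decode :: "'a::field mat \<Rightarrow> nat \<Rightarrow> nat set \<Rightarrow> (nat \<Rightarrow> 'a fvec) \<Rightarrow> nat \<Rightarrow> nat \<Rightarrow> 'a" where
  "decode W U S y k l =
     (THE v. \<exists>s::nat \<Rightarrow> 'a. (\<forall>j\<in>S. (\<Sum>k'<U. s k' * W $$ (k', j)) = y j l) \<and> s k = v)"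

text \<open>Server output, given surviving set U1 and the set S of U users whose
  phase-(iii) messages it uses: sum of masked models minus decoded aggregate mask.\<close>
definition server_output ::
  "'a::field mat \<Rightarrow> nat \<Rightarrow> nat \<Rightarrow> nat \<Rightarrow> nat set \<Rightarrow> nat set \<Rightarrow> 'a fvec fvec
     \<Rightarrow> 'a fvec fvec \<Rightarrow> (nat \<Rightarrow> nat \<Rightarrow> 'a fvec) \<Rightarrow> 'a fvec" where
  "server_output W d U T U1 S xs zs ns =
     (\<lambda>p\<in>{..<d}. (\<Sum>i\<in>U1. xs i p + zs i p)
        - decode W U S (agg_msg W d U T U1 zs ns) (p div sublen d U T) (p mod sublen d U T))"

text \<open>Everything the server receives: all masked models (worst case) and the
  phase-(iii) messages of all surviving users.\<close>
definition server_view ::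
  "'a::field mat \<Rightarrow> nat \<Rightarrow> nat \<Rightarrow> nat \<Rightarrow> nat \<Rightarrow> nat set \<Rightarrow>
     'a fvec fvec \<times> ('a fvec fvec \<times> (nat \<Rightarrow> nat \<Rightarrow> 'a fvec)) \<Rightarrow> 'a fvec fvec \<times> 'a fvec fvec" where
  "server_view W N d U T U1 = (\<lambda>(xs, zs, ns).
     ((\<lambda>i\<in>{..<N}. \<lambda>p\<in>{..<d}. xs i p + zs i p),
      (\<lambda>j\<in>U1. agg_msg W d U T U1 zs ns j)))"

definition colluders_view ::
  "'a::field mat \<Rightarrow> nat \<Rightarrow> nat \<Rightarrow> nat \<Rightarrow> nat \<Rightarrow> nat set \<Rightarrow>
     'a fvec fvec \<times> ('a fvec fvec \<times> (nat \<Rightarrow> nat \<Rightarrow> 'a fvec)) \<Rightarrow>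
     nat \<Rightarrow> 'a fvec \<times> 'a fvec \<times> (nat \<Rightarrow> 'a fvec) \<times> 'a fvec fvec" where
  "colluders_view W N d U T Tc = (\<lambda>(xs, zs, ns).
     (\<lambda>t\<in>Tc. (xs t, zs t, ns t,
               (\<lambda>i\<in>{..<N} - {t}. enc_mask W d U T (zs i) (ns i) t))))"

text \<open>Privacy guarantee T: for every distribution of the models (independent of the
  protocol randomness), every set U1 of surviving users and every set Tc of at most
  T colluding users, I(models; server view | sum of surviving models, Z_Tc) = 0.\<close>
definition lightsecagg_private :: "'a::{field,finite} mat \<Rightarrow> nat \<Rightarrow> nat \<Rightarrow> nat \<Rightarrow> nat \<Rightarrow> bool" where
  "lightsecagg_private W N d U T \<longleftrightarrow>
     (\<forall>PX :: 'a fvec fvec pmf. \<forall>U1 Tc.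
        set_pmf PX \<subseteq> PiE {..<N} (\<lambda>_. fvecs d) \<longrightarrow>
        U1 \<subseteq> {..<N} \<longrightarrow> Tc \<subseteq> {..<N} \<longrightarrow> card Tc \<le> T \<longrightarrow>
        cond_mutual_info (pair_pmf PX (rand_pmf N d U T))
          (\<lambda>\<omega>. fst \<omega>)
          (server_view W N d U T U1)
          (\<lambda>\<omega>. ((\<lambda>p\<in>{..<d}. \<Sum>i\<in>U1. fst \<omega> i p), colluders_view W N d U T Tc \<omega>)) = 0)"

text \<open>Dropout-resiliency guarantee D: for all models and all choices of randomness,
  if U1 is the set of users whose masked models arrive and U2 \<subseteq> U1 the set of users
  that send their phase-(iii) message, with at most D users dropped overall,
  then the server receives at least U messages, and decoding from ANY U received
  messages yields the sum of the surviving users' models.\<close>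
definition lightsecagg_dropout_resilient ::
  "'a::field mat \<Rightarrow> nat \<Rightarrow> nat \<Rightarrow> nat \<Rightarrow> nat \<Rightarrow> nat \<Rightarrow> bool" where
  "lightsecagg_dropout_resilient W N d U T D \<longleftrightarrow>
     (\<forall>xs zs ns U1 U2.
        xs \<in> PiE {..<N} (\<lambda>_. fvecs d) \<longrightarrow> zs \<in> masks_space N d \<longrightarrow>
        ns \<in> noise_space N d U T \<longrightarrow>
        U2 \<subseteq> U1 \<longrightarrow> U1 \<subseteq> {..<N} \<longrightarrow> card ({..<N} - U2) \<le> D \<longrightarrow>
        (\<exists>S. S \<subseteq> U2 \<and> card S = U) \<and>
        (\<forall>S. S \<subseteq> U2 \<longrightarrow> card S = U \<longrightarrow>
           server_output W d U T U1 S xs zs ns = (\<lambda>p\<in>{..<d}. \<Sum>i\<in>U1. xs i p)))"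

end

theory Submission
  imports Defs
begin

text \<open>
  Every message of the protocol is linear in the coefficient vectors
  c_i = ([z_i]_1, ..., [z_i]_(U-T), [n_i]_(U-T+1), ..., [n_i]_U) of the users: user j receives the
  encoded masks c_i W_j, and the server receives the masked models x_i + z_i and the values
  (sum over U1 of c_i) W_j. Dropout resiliency is then plain decoding: any U columns of the MDS
  matrix W form an invertible matrix, so U messages determine the aggregate mask.

  For privacy, take two model profiles x and x' with the same sum over U1 that agree on the
  colluders. Translate each mask z_i by x_i - x'_i and each noise n_i by a linear function of that
  difference, chosen with the inverse of the T x T noise block of W at (a superset of) the
  colluders so that c_i W_t is unchanged for every colluder t. The translation is linear, so the
  shifts of the surviving users cancel in the aggregate, and it is a bijection of the uniformly
  distributed randomness. Hence the joint law of the server's and colluders' views given the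
  models depends only on the aggregate and on the colluders' own models, which is exactly
  conditional independence, i.e. vanishing conditional mutual information.
\<close>

section \<open>Inverses of square submatrices\<close>

lemma bij_betw_pick: "finite R \<Longrightarrow> bij_betw (pick R) {..<card R} R"
  by (rule bij_betw_byWitness[where f' = "\<lambda>x. card {a\<in>R. a < x}"])
     (auto simp: card_pick pick_card_in_set pick_in_set intro!: psubset_card_mono)

lemma sum_card_less_reindex:
  fixes R :: "nat set"
  assumes "finite R"
  shows "(\<Sum>k\<in>R. f (card {a\<in>R. a < k})) = (\<Sum>i<card R. f i)"
proof -
  have "(\<Sum>i<card R. f i) = (\<Sum>i<card R. f (card {a\<in>R. a < pick R i}))"
    by (simp add: card_pick)
  also have "\<dots> = (\<Sum>k\<in>R. f (card {a\<in>R. a < k}))"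
    by (rule sum.reindex_bij_betw[OF bij_betw_pick[OF assms]])
  finally show ?thesis ..
qed

lemma submatrix_carrier:
  assumes "R \<subseteq> {..<dim_row W}" and "S \<subseteq> {..<dim_col W}"
  shows "submatrix W R S \<in> carrier_mat (card R) (card S)"
proof -
  have "{i. i < dim_row W \<and> i \<in> R} = R" "{j. j < dim_col W \<and> j \<in> S} = S"
    using assms by auto
  then show ?thesis by (intro carrier_matI) (simp_all add: dim_submatrix)
qed

lemma mult_submatrix_index:
  fixes W :: "'a::semiring_1 mat"
  assumes R: "R \<subseteq> {..<dim_row W}" and S: "S \<subseteq> {..<dim_col W}"
    and M: "M \<in> carrier_mat m (card R)" and a: "a < m" and j: "j \<in> S"
  shows "(M * submatrix W R S) $$ (a, card {s\<in>S. s < j}) =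
    (\<Sum>k\<in>R. M $$ (a, card {r\<in>R. r < k}) * W $$ (k, j))"
proof -
  let ?B = "submatrix W R S" and ?j = "card {s\<in>S. s < j}"
  have B: "?B \<in> carrier_mat (card R) (card S)" by (rule submatrix_carrier[OF R S])
  have "?j < card S" using S j finite_subset by (intro psubset_card_mono) auto
  then have "(M * ?B) $$ (a, ?j) = (\<Sum>i<card R. M $$ (a, i) * ?B $$ (i, ?j))"
    using M B a by (auto simp: scalar_prod_def lessThan_atLeast0 intro!: sum.cong)
  also have "\<dots> = (\<Sum>k\<in>R. M $$ (a, card {r\<in>R. r < k}) * ?B $$ (card {r\<in>R. r < k}, ?j))"
    using R finite_subset by (subst sum_card_less_reindex) auto
  also have "\<dots> = (\<Sum>k\<in>R. M $$ (a, card {r\<in>R. r < k}) * W $$ (k, j))"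
    using R S j by (intro sum.cong refl arg_cong[where f = "(*) _"] submatrix_index_card) auto
  finally show ?thesis .
qed

lemma submatrix_mult_index:
  fixes W :: "'a::semiring_1 mat"
  assumes R: "R \<subseteq> {..<dim_row W}" and S: "S \<subseteq> {..<dim_col W}"
    and M: "M \<in> carrier_mat (card S) m" and b: "b < m" and k: "k \<in> R"
  shows "(submatrix W R S * M) $$ (card {r\<in>R. r < k}, b) =
    (\<Sum>j\<in>S. W $$ (k, j) * M $$ (card {s\<in>S. s < j}, b))"
proof -
  let ?B = "submatrix W R S" and ?k = "card {r\<in>R. r < k}"
  have B: "?B \<in> carrier_mat (card R) (card S)" by (rule submatrix_carrier[OF R S])
  have "?k < card R" using R k finite_subset by (intro psubset_card_mono) auto
  then have "(?B * M) $$ (?k, b) = (\<Sum>i<card S. ?B $$ (?k, i) * M $$ (i, b))"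
    using M B b by (auto simp: scalar_prod_def lessThan_atLeast0 intro!: sum.cong)
  also have "\<dots> = (\<Sum>j\<in>S. ?B $$ (?k, card {s\<in>S. s < j}) * M $$ (card {s\<in>S. s < j}, b))"
    using S finite_subset by (subst sum_card_less_reindex) auto
  also have "\<dots> = (\<Sum>j\<in>S. W $$ (k, j) * M $$ (card {s\<in>S. s < j}, b))"
    using R S k by (intro sum.cong refl arg_cong[where f = "\<lambda>x. x * _"] submatrix_index_card) auto
  finally show ?thesis .
qed

lemma invertible_mat_inverse:
  fixes B :: "'a::semiring_1 mat"
  assumes "invertible_mat B" and "B \<in> carrier_mat n n"
  obtains B' where "B' \<in> carrier_mat n n" "B * B' = 1\<^sub>m n" "B' * B = 1\<^sub>m n"
proof -
  obtain B' where "B * B' = 1\<^sub>m n" and B'B: "B' * B = 1\<^sub>m (dim_row B')"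
    using assms by (auto simp: invertible_mat_def inverts_mat_def)
  moreover from this have "B' \<in> carrier_mat n n"
    using assms(2) by (metis carrier_matD(2) carrier_matI index_mult_mat(3) index_one_mat(3))
  ultimately show thesis using that by simp
qed

lemma submatrix_inverse:
  fixes W :: "'a::semiring_1 mat"
  assumes R: "R \<subseteq> {..<dim_row W}" and S: "S \<subseteq> {..<dim_col W}" and card: "card R = card S"
    and inv: "invertible_mat (submatrix W R S)"
  obtains C where
    "\<And>j j'. j \<in> S \<Longrightarrow> j' \<in> S \<Longrightarrow> (\<Sum>k\<in>R. C j k * W $$ (k, j')) = (if j = j' then 1 else 0)"
    "\<And>k k'. k \<in> R \<Longrightarrow> k' \<in> R \<Longrightarrow> (\<Sum>j\<in>S. W $$ (k, j) * C j k') = (if k = k' then 1 else 0)"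
proof -
  define idx where "idx X x = card {a\<in>X. a < x}" for X and x :: nat
  have fin: "finite R" "finite S" using R S finite_subset by auto
  have idx_less: "x \<in> X \<Longrightarrow> idx X x < card X" if "finite X" for X x
    unfolding idx_def using that by (intro psubset_card_mono) auto
  have idx_inj: "x \<in> X \<Longrightarrow> y \<in> X \<Longrightarrow> idx X x = idx X y \<longleftrightarrow> x = y" for X x y
    using pick_card_in_set[of x X] pick_card_in_set[of y X] unfolding idx_def by metis
  have "submatrix W R S \<in> carrier_mat (card R) (card R)"
    using submatrix_carrier[OF R S] card by simp
  then obtain B' where B': "B' \<in> carrier_mat (card R) (card R)"
    and BB': "submatrix W R S * B' = 1\<^sub>m (card R)" and B'B: "B' * submatrix W R S = 1\<^sub>m (card R)"
    using invertible_mat_inverse[OF inv] by blast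
  \<comment> \<open>C is the inverse of the submatrix, with its rows indexed by S and its columns by R.\<close>
  define C where "C j k = B' $$ (idx S j, idx R k)" for j k
  show thesis
  proof
    fix j j' assume j: "j \<in> S" and j': "j' \<in> S"
    have "(\<Sum>k\<in>R. C j k * W $$ (k, j')) = (B' * submatrix W R S) $$ (idx S j, idx S j')"
      using mult_submatrix_index[OF R S B' _ j', folded idx_def] idx_less[OF fin(2) j] card
      by (simp add: C_def)
    also have "\<dots> = (if j = j' then 1 else 0)"
      using B'B idx_less[OF fin(2)] idx_inj[OF j j'] j j' card by simp
    finally show "(\<Sum>k\<in>R. C j k * W $$ (k, j')) = (if j = j' then 1 else 0)" .
  next
    fix k k' assume k: "k \<in> R" and k': "k' \<in> R"
    have "(\<Sum>j\<in>S. W $$ (k, j) * C j k') = (submatrix W R S * B') $$ (idx R k, idx R k')"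
      using submatrix_mult_index[OF R S B'[unfolded card] _ k, folded idx_def]
        idx_less[OF fin(1) k']
      by (simp add: C_def card)
    also have "\<dots> = (if k = k' then 1 else 0)"
      using BB' idx_less[OF fin(1)] idx_inj[OF k k'] k k' by simp
    finally show "(\<Sum>j\<in>S. W $$ (k, j) * C j k') = (if k = k' then 1 else 0)" .
  qed
qed

lemma submatrix_row_combination_eq_0:
  fixes W :: "'a::semiring_1 mat"
  assumes R: "R \<subseteq> {..<dim_row W}" and S: "S \<subseteq> {..<dim_col W}" and card: "card R = card S"
    and inv: "invertible_mat (submatrix W R S)"
    and zero: "\<And>j. j \<in> S \<Longrightarrow> (\<Sum>k\<in>R. v k * W $$ (k, j)) = 0" and k: "k \<in> R"
  shows "v k = 0"
proof -
  obtain C where C: "\<And>k k'. k \<in> R \<Longrightarrow> k' \<in> R \<Longrightarrow>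
      (\<Sum>j\<in>S. W $$ (k, j) * C j k') = (if k = k' then 1 else 0)"
    by (rule submatrix_inverse[OF R S card inv]) (rule that)
  have "finite R" using R finite_subset by blast
  then have "v k = (\<Sum>k'\<in>R. v k' * (if k' = k then 1 else 0))"
    using k by (simp add: if_distrib[of "\<lambda>x. _ * x"] cong: if_cong)
  also have "\<dots> = (\<Sum>k'\<in>R. v k' * (\<Sum>j\<in>S. W $$ (k', j) * C j k))"
    using C k by simp
  also have "\<dots> = (\<Sum>j\<in>S. (\<Sum>k'\<in>R. v k' * W $$ (k', j)) * C j k)"
    by (simp add: sum_distrib_left sum_distrib_right mult.assoc) (rule sum.swap)
  also have "\<dots> = 0"
    using zero by simp
  finally show ?thesis .
qed

section \<open>Decoding and dropout resiliency\<close>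

lemma decode_eqI:
  fixes W :: "'a::field mat"
  assumes mds: "MDS_mat W U N" and S: "S \<subseteq> {..<N}" "card S = U"
    and sol: "\<And>j. j \<in> S \<Longrightarrow> (\<Sum>k'<U. s k' * W $$ (k', j)) = y j l" and k: "k < U"
  shows "decode W U S y k l = s k"
  unfolding decode_def
proof (rule the_equality)
  show "\<exists>s'. (\<forall>j\<in>S. (\<Sum>k'<U. s' k' * W $$ (k', j)) = y j l) \<and> s' k = s k"
    using sol by blast
next
  fix v assume "\<exists>s'. (\<forall>j\<in>S. (\<Sum>k'<U. s' k' * W $$ (k', j)) = y j l) \<and> s' k = v"
  then obtain s' where s': "\<And>j. j \<in> S \<Longrightarrow> (\<Sum>k'<U. s' k' * W $$ (k', j)) = y j l" and v: "s' k = v"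
    by blast
  have W: "W \<in> carrier_mat U N" and inv: "invertible_mat (submatrix W {..<U} S)"
    using mds S unfolding MDS_mat_def by auto
  have "s' k - s k = 0"
  proof (rule submatrix_row_combination_eq_0[where R = "{..<U}" and v = "\<lambda>k'. s' k' - s k'"])
    show "{..<U} \<subseteq> {..<dim_row W}" "S \<subseteq> {..<dim_col W}" "card {..<U} = card S" "k \<in> {..<U}"
      using W S k by auto
    show "invertible_mat (submatrix W {..<U} S)" by (rule inv)
    fix j assume "j \<in> S"
    then show "(\<Sum>k'\<in>{..<U}. (s' k' - s k') * W $$ (k', j)) = 0"
      using s' sol by (simp add: left_diff_distrib sum_subtractf)
  qed
  then show "v = s k" using v by simp
qed

lemma agg_msg_eq:
  "agg_msg W d U T U1 zs ns j =
     (\<lambda>l\<in>{..<sublen d U T}. \<Sum>k<U. (\<Sum>i\<in>U1. coeff d U T (zs i) (ns i) k l) * W $$ (k, j))"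
  unfolding agg_msg_def enc_mask_def
  by (intro restrict_ext) (simp add: sum_distrib_right sum.swap[of _ U1])

lemma server_output_eq_sum_models:
  fixes W :: "'a::field mat"
  assumes mds: "MDS_mat W U N" and dvd: "(U - T) dvd d" and S: "S \<subseteq> {..<N}" "card S = U"
  shows "server_output W d U T U1 S xs zs ns = (\<lambda>p\<in>{..<d}. \<Sum>i\<in>U1. xs i p)"
  unfolding server_output_def
proof (rule restrict_ext)
  fix p assume "p \<in> {..<d}"
  define m where "m = sublen d U T"
  have d: "d = (U - T) * m" using dvd unfolding m_def sublen_def by simp
  then have k: "p div m < U - T" using \<open>p \<in> {..<d}\<close> by (simp add: less_mult_imp_div_less)
  have "0 < m" using \<open>p \<in> {..<d}\<close> d by (intro gr0I) auto
  then have l: "p mod m < m" by simp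
  have "decode W U S (agg_msg W d U T U1 zs ns) (p div m) (p mod m) =
      (\<Sum>i\<in>U1. coeff d U T (zs i) (ns i) (p div m) (p mod m))"
    by (rule decode_eqI[OF mds S, where s = "\<lambda>k. \<Sum>i\<in>U1. coeff d U T (zs i) (ns i) k (p mod m)"])
       (use k l in \<open>simp_all add: agg_msg_eq m_def\<close>)
  also have "\<dots> = (\<Sum>i\<in>U1. zs i p)"
    using k by (simp add: coeff_def m_def)
  finally show "(\<Sum>i\<in>U1. xs i p + zs i p) -
      decode W U S (agg_msg W d U T U1 zs ns) (p div sublen d U T) (p mod sublen d U T) =
      (\<Sum>i\<in>U1. xs i p)"
    by (simp add: m_def sum.distrib)
qed

lemma lightsecagg_dropout_resilientI:
  fixes W :: "'a::field mat"
  assumes "U \<le> N - D" and "(U - T) dvd d" and mds: "MDS_mat W U N"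
  shows "lightsecagg_dropout_resilient W N d U T D"
  unfolding lightsecagg_dropout_resilient_def
proof (intro allI impI)
  fix xs zs ns and U1 U2 :: "nat set"
  assume "U2 \<subseteq> U1" "U1 \<subseteq> {..<N}" "card ({..<N} - U2) \<le> D"
  then have U2: "U2 \<subseteq> {..<N}" and "finite U2" by (auto intro: finite_subset)
  then have "card ({..<N} - U2) = N - card U2" and "card U2 \<le> N"
    by (auto simp: card_Diff_subset intro: card_mono[where B = "{..<N}", simplified])
  then have "U \<le> card U2" using assms(1) \<open>card ({..<N} - U2) \<le> D\<close> by linarith
  then have "\<exists>S. S \<subseteq> U2 \<and> card S = U" by (meson obtain_subset_with_card_n)
  moreover have "\<forall>S. S \<subseteq> U2 \<longrightarrow> card S = U \<longrightarrow>
      server_output W d U T U1 S xs zs ns = (\<lambda>p\<in>{..<d}. \<Sum>i\<in>U1. xs i p)"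
    using server_output_eq_sum_models[OF mds assms(2)] U2 by blast
  ultimately show "(\<exists>S. S \<subseteq> U2 \<and> card S = U) \<and>
      (\<forall>S. S \<subseteq> U2 \<longrightarrow> card S = U \<longrightarrow> server_output W d U T U1 S xs zs ns = (\<lambda>p\<in>{..<d}. \<Sum>i\<in>U1. xs i p))"
    by blast
qed

section \<open>Vanishing conditional mutual information\<close>

lemma pmf_map_pair_pmf:
  assumes "finite (set_pmf PX)"
  shows "pmf (map_pmf f (pair_pmf PX R)) a =
    (\<Sum>x\<in>set_pmf PX. pmf PX x * pmf (map_pmf (\<lambda>r. f (x, r)) R) a)"
proof -
  have "map_pmf f (pair_pmf PX R) = bind_pmf PX (\<lambda>x. map_pmf (\<lambda>r. f (x, r)) R)"
    by (simp add: pair_pmf_def map_bind_pmf bind_return_pmf map_pmf_def bind_assoc_pmf)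
  then show ?thesis
    by (simp add: pmf_bind integral_measure_pmf[OF assms] mult.commute)
qed

lemma pmf_map_pair_pmf_fst:
  assumes "finite (set_pmf PX)"
  shows "pmf (map_pmf (\<lambda>\<omega>. (fst \<omega>, F \<omega>)) (pair_pmf PX R)) (x, a) =
    pmf PX x * pmf (map_pmf (\<lambda>r. F (x, r)) R) a"
proof -
  have "pmf (map_pmf (\<lambda>r. (x', F (x', r))) R) (x, a) =
      (if x' = x then pmf (map_pmf (\<lambda>r. F (x, r)) R) a else 0)" for x'
  proof (cases "x' = x")
    case True
    have "map_pmf (\<lambda>r. (x, F (x, r))) R = map_pmf (Pair x) (map_pmf (\<lambda>r. F (x, r)) R)"
      by (simp add: pmf.map_comp o_def)
    then show ?thesis using True by (simp add: pmf_map_inj' inj_on_def)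
  qed (auto simp: pmf_eq_0_set_pmf)
  then show ?thesis
    using assms
    by (simp add: pmf_map_pair_pmf if_distrib[of "\<lambda>v. _ * v"] pmf_eq_0_set_pmf cong: if_cong)
qed

lemma sum_pmf_kernel_eq:
  assumes same: "\<And>x'. x' \<in> A \<Longrightarrow> g x' = g x \<Longrightarrow> P x' = P x"
    and supp: "\<And>x' w'. x' \<in> A \<Longrightarrow> w' \<in> set_pmf (P x') \<Longrightarrow> h w' = g x'"
    and w: "h w = g x"
  shows "(\<Sum>x'\<in>A. p x' * pmf (P x') w) = pmf (P x) w * (\<Sum>x'\<in>A. if g x' = g x then p x' else 0)"
proof -
  have "p x' * pmf (P x') w = pmf (P x) w * (if g x' = g x then p x' else 0)" if "x' \<in> A" for x'
    using same[OF that] supp[OF that] w by (auto simp: pmf_eq_0_set_pmf)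
  then show ?thesis by (simp add: sum_distrib_left)
qed

lemma cond_mutual_info_eq_0I:
  assumes "\<And>\<omega>. \<omega> \<in> set_pmf M \<Longrightarrow>
      pmf (map_pmf (\<lambda>\<omega>. (X \<omega>, Y \<omega>, Z \<omega>)) M) (X \<omega>, Y \<omega>, Z \<omega>) * pmf (map_pmf Z M) (Z \<omega>) =
      pmf (map_pmf (\<lambda>\<omega>. (X \<omega>, Z \<omega>)) M) (X \<omega>, Z \<omega>) * pmf (map_pmf (\<lambda>\<omega>. (Y \<omega>, Z \<omega>)) M) (Y \<omega>, Z \<omega>)"
  shows "cond_mutual_info M X Y Z = 0"
proof -
  have log_term: "a * log 2 (a * b / (c * e)) = 0" if "a * b = c * e" "b \<noteq> 0" for a b c e :: real
    using that by (cases "a = 0") auto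
  have "pmf (map_pmf (\<lambda>\<omega>. (X \<omega>, Y \<omega>, Z \<omega>)) M) (X \<omega>, Y \<omega>, Z \<omega>) *
      log 2 (pmf (map_pmf (\<lambda>\<omega>. (X \<omega>, Y \<omega>, Z \<omega>)) M) (X \<omega>, Y \<omega>, Z \<omega>) * pmf (map_pmf Z M) (Z \<omega>) /
        (pmf (map_pmf (\<lambda>\<omega>. (X \<omega>, Z \<omega>)) M) (X \<omega>, Z \<omega>) * pmf (map_pmf (\<lambda>\<omega>. (Y \<omega>, Z \<omega>)) M) (Y \<omega>, Z \<omega>)))
      = 0" if "\<omega> \<in> set_pmf M" for \<omega>
    using that by (intro log_term assms) (simp_all flip: set_pmf_iff)
  then show ?thesis
    unfolding cond_mutual_info_def by (intro sum.neutral) (auto simp: Let_def)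
qed

lemma cond_mutual_info_pair_pmf_eq_0:
  fixes PX :: "'x pmf" and R :: "'r pmf"
  assumes fin: "finite (set_pmf PX)"
    and determined: "\<And>x r. x \<in> set_pmf PX \<Longrightarrow> r \<in> set_pmf R \<Longrightarrow> h (Z (x, r)) = g x"
    and invariant: "\<And>x x'. x \<in> set_pmf PX \<Longrightarrow> x' \<in> set_pmf PX \<Longrightarrow> g x = g x' \<Longrightarrow>
        map_pmf (\<lambda>r. (Y (x, r), Z (x, r))) R = map_pmf (\<lambda>r. (Y (x', r), Z (x', r))) R"
  shows "cond_mutual_info (pair_pmf PX R) fst Y Z = 0"
proof (rule cond_mutual_info_eq_0I)
  fix \<omega> assume "\<omega> \<in> set_pmf (pair_pmf PX R)"
  then obtain x r where x: "x \<in> set_pmf PX" and r: "r \<in> set_pmf R" and \<omega>: "\<omega> = (x, r)"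
    by auto
  define Q where "Q x' = map_pmf (\<lambda>r. (Y (x', r), Z (x', r))) R" for x'
  define G where "G = (\<Sum>x'\<in>set_pmf PX. if g x' = g x then pmf PX x' else 0)"
  have Q_same: "Q x' = Q x" and Q_snd_same: "map_pmf snd (Q x') = map_pmf snd (Q x)"
    if "x' \<in> set_pmf PX" "g x' = g x" for x'
    using invariant[OF that(1) x] that(2) by (simp_all add: Q_def)
  have Q_supp: "h (snd w) = g x'" if "x' \<in> set_pmf PX" "w \<in> set_pmf (Q x')" for x' w
    using that determined by (auto simp: Q_def)
  have Q_snd: "map_pmf (\<lambda>r. Z (x', r)) R = map_pmf snd (Q x')" for x'
    by (simp add: Q_def pmf.map_comp o_def)
  have hz: "h (Z (x, r)) = g x" using determined[OF x r] .
  have "pmf (map_pmf (\<lambda>\<omega>. (fst \<omega>, Y \<omega>, Z \<omega>)) (pair_pmf PX R)) (x, Y (x, r), Z (x, r))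
      = pmf PX x * pmf (Q x) (Y (x, r), Z (x, r))"
    using pmf_map_pair_pmf_fst[OF fin, where F = "\<lambda>\<omega>. (Y \<omega>, Z \<omega>)"] by (simp add: Q_def)
  moreover have "pmf (map_pmf (\<lambda>\<omega>. (fst \<omega>, Z \<omega>)) (pair_pmf PX R)) (x, Z (x, r))
      = pmf PX x * pmf (map_pmf snd (Q x)) (Z (x, r))"
    using pmf_map_pair_pmf_fst[OF fin, where F = Z] by (simp add: Q_snd)
  moreover have "pmf (map_pmf (\<lambda>\<omega>. (Y \<omega>, Z \<omega>)) (pair_pmf PX R)) (Y (x, r), Z (x, r))
      = pmf (Q x) (Y (x, r), Z (x, r)) * G"
    unfolding pmf_map_pair_pmf[OF fin] G_def Q_def[symmetric]
    by (rule sum_pmf_kernel_eq[where h = "\<lambda>w. h (snd w)"]) (use Q_same Q_supp hz in auto)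
  moreover have "pmf (map_pmf Z (pair_pmf PX R)) (Z (x, r)) =
      pmf (map_pmf snd (Q x)) (Z (x, r)) * G"
    unfolding pmf_map_pair_pmf[OF fin] G_def Q_snd
    by (rule sum_pmf_kernel_eq[where h = h]) (use Q_snd_same Q_supp hz in auto)
  ultimately show "pmf (map_pmf (\<lambda>\<omega>. (fst \<omega>, Y \<omega>, Z \<omega>)) (pair_pmf PX R)) (fst \<omega>, Y \<omega>, Z \<omega>) *
      pmf (map_pmf Z (pair_pmf PX R)) (Z \<omega>) =
      pmf (map_pmf (\<lambda>\<omega>. (fst \<omega>, Z \<omega>)) (pair_pmf PX R)) (fst \<omega>, Z \<omega>) *
      pmf (map_pmf (\<lambda>\<omega>. (Y \<omega>, Z \<omega>)) (pair_pmf PX R)) (Y \<omega>, Z \<omega>)"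
    by (simp add: \<omega>)
qed

section \<open>Privacy\<close>

lemma T_private_MDS_noise_compensation:
  fixes W :: "'a::field mat"
  assumes mds: "T_private_MDS W U N T" and TN: "T \<le> N" and Tc: "Tc \<subseteq> {..<N}" "card Tc \<le> T"
  obtains noise_of :: "(nat \<Rightarrow> 'a) \<Rightarrow> nat \<Rightarrow> 'a" where
    "\<And>v t. t \<in> Tc \<Longrightarrow> (\<Sum>k<U-T. v k * W $$ (k, t)) = (\<Sum>k\<in>{U-T..<U}. noise_of v k * W $$ (k, t))"
    "\<And>(I :: nat set) v k. noise_of (\<lambda>k'. \<Sum>i\<in>I. v i k') k = (\<Sum>i\<in>I. noise_of (v i) k)"
    "\<And>v k. \<forall>k'<U - T. v k' = 0 \<Longrightarrow> noise_of v k = 0"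
proof -
  have "\<exists>T'. Tc \<subseteq> T' \<and> T' \<subseteq> {..<N} \<and> card T' = T"
    using TN by (intro exists_subset_between[OF Tc(2) _ Tc(1)]) simp_all
  then obtain T' where T': "Tc \<subseteq> T'" "T' \<subseteq> {..<N}" "card T' = T"
    by blast
  have W: "W \<in> carrier_mat U N" and TU: "T \<le> U" and inv: "invertible_mat (submatrix W {U-T..<U} T')"
    using mds T'(2,3) unfolding T_private_MDS_def MDS_mat_def by blast+
  have RS: "{U-T..<U} \<subseteq> {..<dim_row W}" "T' \<subseteq> {..<dim_col W}" "card {U-T..<U} = card T'"
    using W T' TU by auto
  obtain C where C: "\<And>t t'. t \<in> T' \<Longrightarrow> t' \<in> T' \<Longrightarrow>
      (\<Sum>k\<in>{U-T..<U}. C t k * W $$ (k, t')) = (if t = t' then 1 else 0)"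
    by (rule submatrix_inverse[OF RS inv]) (rule that)
  have fin: "finite T'" using T' finite_subset by blast
  define noise_of where "noise_of v k = (\<Sum>t\<in>T'. (\<Sum>k'<U-T. v k' * W $$ (k', t)) * C t k)" for v k
  show thesis
  proof
    fix v t assume "t \<in> Tc"
    then have t: "t \<in> T'" using T' by blast
    have "(\<Sum>k\<in>{U-T..<U}. noise_of v k * W $$ (k, t)) =
        (\<Sum>t'\<in>T'. (\<Sum>k'<U-T. v k' * W $$ (k', t')) * (\<Sum>k\<in>{U-T..<U}. C t' k * W $$ (k, t)))"
      unfolding noise_of_def
      by (simp add: sum_distrib_left sum_distrib_right mult.assoc) (rule sum.swap)
    also have "\<dots> = (\<Sum>k<U-T. v k * W $$ (k, t))"
      using C t fin by (simp add: if_distrib[of "\<lambda>x. _ * x"] cong: if_cong)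
    finally show "(\<Sum>k<U-T. v k * W $$ (k, t)) = (\<Sum>k\<in>{U-T..<U}. noise_of v k * W $$ (k, t))" ..
  next
    fix I :: "nat set" and v k show "noise_of (\<lambda>k'. \<Sum>i\<in>I. v i k') k = (\<Sum>i\<in>I. noise_of (v i) k)"
      unfolding noise_of_def by (simp add: sum_distrib_right sum.swap[of _ I])
  next
    fix v :: "nat \<Rightarrow> 'a" and k assume "\<forall>k'<U - T. v k' = 0"
    then show "noise_of v k = 0" unfolding noise_of_def by simp
  qed
qed

lemma mult_add_less_mult:
  fixes k l m V :: nat
  assumes "k < V" "l < m"
  shows "k * m + l < V * m"
proof -
  have "k * m + l < Suc k * m" using assms(2) by simp
  also have "\<dots> \<le> V * m" using assms(1) by (intro mult_le_mono1) simp
  finally show ?thesis .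
qed

lemma compensated_coeff_column_eq_0:
  fixes W :: "'a::comm_ring_1 mat" and noise_of :: "(nat \<Rightarrow> 'a) \<Rightarrow> nat \<Rightarrow> 'a"
  assumes noise_of_W: "\<And>v. (\<Sum>k<U-T. v k * W $$ (k, t)) = (\<Sum>k\<in>{U-T..<U}. noise_of v k * W $$ (k, t))"
    and TU: "T \<le> U"
  shows "(\<Sum>k<U. coeff d U T z (\<lambda>k l. noise_of (\<lambda>k'. - z (k' * sublen d U T + l)) k) k l *
    W $$ (k, t)) = 0"
proof -
  let ?m = "sublen d U T"
  let ?c = "coeff d U T z (\<lambda>k l. noise_of (\<lambda>k'. - z (k' * ?m + l)) k)"
  have noise: "(\<Sum>k\<in>{U-T..<U}. noise_of (\<lambda>k'. - z (k' * ?m + l)) k * W $$ (k, t)) =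
      - (\<Sum>k<U-T. z (k * ?m + l) * W $$ (k, t))"
    using noise_of_W[of "\<lambda>k'. - z (k' * ?m + l)"] by (simp add: sum_negf)
  have "(\<Sum>k<U. ?c k l * W $$ (k, t)) =
      (\<Sum>k<U-T. ?c k l * W $$ (k, t)) + (\<Sum>k\<in>{U-T..<U}. ?c k l * W $$ (k, t))"
    using TU by (simp add: lessThan_atLeast0 sum.atLeastLessThan_concat)
  also have "\<dots> = (\<Sum>k<U-T. z (k * ?m + l) * W $$ (k, t)) +
      (\<Sum>k\<in>{U-T..<U}. noise_of (\<lambda>k'. - z (k' * ?m + l)) k * W $$ (k, t))"
    by (simp add: coeff_def)
  also have "\<dots> = 0"
    by (simp add: noise)
  finally show ?thesis .
qed

lemma compensated_coeff_sum_eq_0: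
  fixes noise_of :: "(nat \<Rightarrow> 'a::comm_ring_1) \<Rightarrow> nat \<Rightarrow> 'a"
  assumes noise_of_sum: "\<And>v k. noise_of (\<lambda>k'. \<Sum>i\<in>I. v i k') k = (\<Sum>i\<in>I. noise_of (v i) k)"
    and noise_of_0: "\<And>v k. \<forall>k'<U - T. v k' = 0 \<Longrightarrow> noise_of v k = 0"
    and dvd: "(U - T) dvd d" and zero: "\<forall>p<d. (\<Sum>i\<in>I. z i p) = 0" and l: "l < sublen d U T"
  shows "(\<Sum>i\<in>I. coeff d U T (z i) (\<lambda>k l. noise_of (\<lambda>k'. - z i (k' * sublen d U T + l)) k) k l) = 0"
proof -
  let ?m = "sublen d U T"
  have block: "k' * ?m + l < d" if "k' < U - T" for k'
    using mult_add_less_mult[OF that l] dvd by (simp add: sublen_def)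
  show ?thesis
  proof (cases "k < U - T")
    case True
    then show ?thesis using zero block[OF True] by (simp add: coeff_def)
  next
    case False
    have "(\<Sum>i\<in>I. noise_of (\<lambda>k'. - z i (k' * ?m + l)) k) =
        noise_of (\<lambda>k'. \<Sum>i\<in>I. - z i (k' * ?m + l)) k"
      by (rule noise_of_sum[of "\<lambda>i k'. - z i (k' * ?m + l)", symmetric])
    also have "\<dots> = 0"
      using zero block by (intro noise_of_0) (simp add: sum_negf)
    finally show ?thesis using False by (simp add: coeff_def)
  qed
qed

definition translate_rand ::
  "nat \<Rightarrow> nat \<Rightarrow> nat \<Rightarrow> nat \<Rightarrow> (nat \<Rightarrow> 'a::plus fvec) \<Rightarrow> (nat \<Rightarrow> nat \<Rightarrow> 'a fvec) \<Rightarrow>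
     'a fvec fvec \<times> (nat \<Rightarrow> nat \<Rightarrow> 'a fvec) \<Rightarrow> 'a fvec fvec \<times> (nat \<Rightarrow> nat \<Rightarrow> 'a fvec)" where
  "translate_rand N d U T a b = (\<lambda>(zs, ns).
     (\<lambda>i\<in>{..<N}. \<lambda>p\<in>{..<d}. zs i p + a i p,
      \<lambda>i\<in>{..<N}. \<lambda>k\<in>{U-T..<U}. \<lambda>l\<in>{..<sublen d U T}. ns i k l + b i k l))"

lemma coeff_translate_rand:
  assumes dvd: "(U - T) dvd d" and translate: "translate_rand N d U T a b (zs, ns) = (zs', ns')"
    and i: "i < N" and k: "k < U" and l: "l < sublen d U T"
  shows "coeff d U T (zs' i) (ns' i) k l =
    coeff d U T (zs i) (ns i) k l + coeff d U T (a i) (b i) k l"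
proof -
  have zs': "zs' i = (\<lambda>p\<in>{..<d}. zs i p + a i p)"
    and ns': "ns' i = (\<lambda>k\<in>{U-T..<U}. \<lambda>l\<in>{..<sublen d U T}. ns i k l + b i k l)"
    using translate[symmetric] i by (simp_all add: translate_rand_def)
  show ?thesis
  proof (cases "k < U - T")
    case True
    then have "k * sublen d U T + l < (U - T) * sublen d U T"
      using l by (rule mult_add_less_mult)
    then show ?thesis using True dvd by (simp add: zs' coeff_def sublen_def)
  qed (use k l in \<open>simp add: ns' coeff_def\<close>)
qed

lemma bij_betw_restrict_PiE:
  assumes "\<And>i. i \<in> A \<Longrightarrow> bij_betw (h i) (B i) (C i)"
  shows "bij_betw (\<lambda>f. \<lambda>i\<in>A. h i (f i)) (PiE A B) (PiE A C)"
proof (rule bij_betw_byWitness[where f' = "\<lambda>g. \<lambda>i\<in>A. inv_into (B i) (h i) (g i)"])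
  have left: "inv_into (B i) (h i) (h i x) = x" and into: "h i x \<in> C i" if "i \<in> A" "x \<in> B i" for i x
    using assms[OF that(1)] that(2) by (simp_all add: bij_betw_inv_into_left bij_betw_apply)
  have right: "h i (inv_into (B i) (h i) y) = y" and into': "inv_into (B i) (h i) y \<in> B i"
    if "i \<in> A" "y \<in> C i" for i y
    using assms[OF that(1)] that(2)
    by (simp_all add: bij_betw_inv_into_right bij_betw_apply[OF bij_betw_inv_into])
  show "\<forall>f\<in>PiE A B. (\<lambda>i\<in>A. inv_into (B i) (h i) ((\<lambda>i\<in>A. h i (f i)) i)) = f"
    "\<forall>g\<in>PiE A C. (\<lambda>i\<in>A. h i ((\<lambda>i\<in>A. inv_into (B i) (h i) (g i)) i)) = g"
    "(\<lambda>f. \<lambda>i\<in>A. h i (f i)) ` PiE A B \<subseteq> PiE A C"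
    "(\<lambda>g. \<lambda>i\<in>A. inv_into (B i) (h i) (g i)) ` PiE A C \<subseteq> PiE A B"
    by (auto simp: PiE_iff extensional_def fun_eq_iff left right into into')
qed

lemma masks_space_finite_nonempty:
  "finite (masks_space N d :: 'a::finite fvec fvec set)" "masks_space N d \<noteq> {}"
  by (auto simp: masks_space_def fvecs_def PiE_eq_empty_iff intro!: finite_PiE)

lemma noise_space_finite_nonempty:
  "finite (noise_space N d U T :: (nat \<Rightarrow> nat \<Rightarrow> 'a::finite fvec) set)" "noise_space N d U T \<noteq> {}"
  by (auto simp: noise_space_def fvecs_def PiE_eq_empty_iff intro!: finite_PiE)

lemma set_pmf_rand_pmf:
  "set_pmf (rand_pmf N d U T :: ('a::finite fvec fvec \<times> _) pmf) =
    masks_space N d \<times> noise_space N d U T"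
  by (simp add: rand_pmf_def masks_space_finite_nonempty noise_space_finite_nonempty)

lemma rand_pmf_translate:
  "map_pmf (translate_rand N d U T a b) (rand_pmf N d U T) =
    (rand_pmf N d U T :: ('a::{finite,group_add} fvec fvec \<times> _) pmf)"
proof -
  have vec: "bij_betw (\<lambda>v. \<lambda>p\<in>{..<n}. v p + c p) (fvecs n) (fvecs n)" for n and c :: "nat \<Rightarrow> 'a"
    unfolding fvecs_def
    by (rule bij_betw_restrict_PiE[where h = "\<lambda>p x. x + c p"]) (rule bij_plus_right)
  have vecs: "bij_betw (\<lambda>v. \<lambda>k\<in>K. \<lambda>l\<in>{..<n}. v k l + c k l)
      (PiE K (\<lambda>_. fvecs n)) (PiE K (\<lambda>_. fvecs n))"
    for K n and c :: "nat \<Rightarrow> nat \<Rightarrow> 'a"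
    by (rule bij_betw_restrict_PiE[where h = "\<lambda>k v. \<lambda>l\<in>{..<n}. v l + c k l"]) (rule vec)
  have "bij_betw (\<lambda>zs. \<lambda>i\<in>{..<N}. \<lambda>p\<in>{..<d}. zs i p + a i p) (masks_space N d) (masks_space N d)"
    unfolding masks_space_def
    by (rule bij_betw_restrict_PiE[where h = "\<lambda>i v. \<lambda>p\<in>{..<d}. v p + a i p"]) (rule vec)
  moreover have "bij_betw (\<lambda>ns. \<lambda>i\<in>{..<N}. \<lambda>k\<in>{U-T..<U}. \<lambda>l\<in>{..<sublen d U T}. ns i k l + b i k l)
      (noise_space N d U T) (noise_space N d U T)"
    unfolding noise_space_def
    by (rule bij_betw_restrict_PiE[where
          h = "\<lambda>i v. \<lambda>k\<in>{U-T..<U}. \<lambda>l\<in>{..<sublen d U T}. v k l + b i k l"])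
       (rule vecs)
  ultimately show ?thesis
    unfolding rand_pmf_def translate_rand_def map_pair
    by (simp add: map_pmf_of_set_bij_betw masks_space_finite_nonempty noise_space_finite_nonempty)
qed

text \<open>
  Conditions under which shifting the masks by a and the noise by b leaves every view of the
  protocol unchanged when the models change from x to x'.
\<close>

definition compensating_shift ::
  "'a::field mat \<Rightarrow> nat \<Rightarrow> nat \<Rightarrow> nat \<Rightarrow> nat set \<Rightarrow> nat set \<Rightarrow> 'a fvec fvec \<Rightarrow> 'a fvec fvec \<Rightarrow>
     (nat \<Rightarrow> 'a fvec) \<Rightarrow> (nat \<Rightarrow> nat \<Rightarrow> 'a fvec) \<Rightarrow> bool" where
  "compensating_shift W d U T U1 Tc x x' a b \<longleftrightarrow>
     (\<forall>i p. x' i p + a i p = x i p) \<and>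
     (\<forall>k<U. \<forall>l<sublen d U T. (\<Sum>i\<in>U1. coeff d U T (a i) (b i) k l) = 0) \<and>
     (\<forall>t\<in>Tc. \<forall>i l. (\<Sum>k<U. coeff d U T (a i) (b i) k l * W $$ (k, t)) = 0) \<and>
     (\<forall>t\<in>Tc. a t = (\<lambda>_. 0) \<and> b t = (\<lambda>_ _. 0))"

lemma server_view_translate_rand:
  fixes W :: "'a::field mat"
  assumes dvd: "(U - T) dvd d" and U1: "U1 \<subseteq> {..<N}"
    and shift: "compensating_shift W d U T U1 Tc x x' a b"
  shows "server_view W N d U T U1 (x', translate_rand N d U T a b (zs, ns)) =
    server_view W N d U T U1 (x, zs, ns)"
proof -
  define zs' where "zs' = (\<lambda>i\<in>{..<N}. \<lambda>p\<in>{..<d}. zs i p + a i p)"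
  define ns' where "ns' = (\<lambda>i\<in>{..<N}. \<lambda>k\<in>{U-T..<U}. \<lambda>l\<in>{..<sublen d U T}. ns i k l + b i k l)"
  have translate: "translate_rand N d U T a b (zs, ns) = (zs', ns')"
    by (simp add: translate_rand_def zs'_def ns'_def)
  have masked: "x' i p + a i p = x i p"
    and sum_zero: "k < U \<Longrightarrow> l < sublen d U T \<Longrightarrow> (\<Sum>i\<in>U1. coeff d U T (a i) (b i) k l) = 0"
    for i p k l
    using shift unfolding compensating_shift_def by blast+
  have masked_models: "(\<lambda>i\<in>{..<N}. \<lambda>p\<in>{..<d}. x' i p + zs' i p) =
      (\<lambda>i\<in>{..<N}. \<lambda>p\<in>{..<d}. x i p + zs i p)"
    unfolding zs'_def by (intro restrict_ext) (simp add: ac_simps flip: masked)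
  have "(\<Sum>i\<in>U1. coeff d U T (zs' i) (ns' i) k l) = (\<Sum>i\<in>U1. coeff d U T (zs i) (ns i) k l)"
    if "k < U" "l < sublen d U T" for k l
    using that U1 sum_zero[of k l]
    by (simp add: coeff_translate_rand[OF dvd translate] sum.distrib subset_iff)
  then have "agg_msg W d U T U1 zs' ns' = agg_msg W d U T U1 zs ns"
    by (intro ext) (simp add: agg_msg_eq cong: restrict_cong)
  then show ?thesis
    by (simp add: translate server_view_def masked_models)
qed

lemma colluders_view_translate_rand:
  fixes W :: "'a::field mat"
  assumes dvd: "(U - T) dvd d" and Tc: "Tc \<subseteq> {..<N}"
    and zs: "zs \<in> masks_space N d" and ns: "ns \<in> noise_space N d U T"
    and shift: "compensating_shift W d U T U1 Tc x x' a b" and agree: "\<forall>t\<in>Tc. x t = x' t"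
  shows "colluders_view W N d U T Tc (x', translate_rand N d U T a b (zs, ns)) =
    colluders_view W N d U T Tc (x, zs, ns)"
proof -
  define zs' where "zs' = (\<lambda>i\<in>{..<N}. \<lambda>p\<in>{..<d}. zs i p + a i p)"
  define ns' where "ns' = (\<lambda>i\<in>{..<N}. \<lambda>k\<in>{U-T..<U}. \<lambda>l\<in>{..<sublen d U T}. ns i k l + b i k l)"
  have translate: "translate_rand N d U T a b (zs, ns) = (zs', ns')"
    by (simp add: translate_rand_def zs'_def ns'_def)
  have invisible: "t \<in> Tc \<Longrightarrow> (\<Sum>k<U. coeff d U T (a i) (b i) k l * W $$ (k, t)) = 0"
    and unshifted: "t \<in> Tc \<Longrightarrow> a t = (\<lambda>_. 0) \<and> b t = (\<lambda>_ _. 0)" for i l t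
    using shift unfolding compensating_shift_def by blast+
  have "(\<Sum>k<U. coeff d U T (zs' i) (ns' i) k l * W $$ (k, t)) =
      (\<Sum>k<U. coeff d U T (zs i) (ns i) k l * W $$ (k, t))"
    if "i < N" "t \<in> Tc" "l < sublen d U T" for i t l
    using that invisible
    by (simp add: coeff_translate_rand[OF dvd translate] distrib_right sum.distrib)
  then have enc: "enc_mask W d U T (zs' i) (ns' i) t = enc_mask W d U T (zs i) (ns i) t"
    if "i < N" "t \<in> Tc" for i t
    using that unfolding enc_mask_def by (simp cong: restrict_cong)
  have own: "zs' t = zs t" "ns' t = ns t" if "t \<in> Tc" for t
    using that Tc zs ns unshifted[OF that]
    by (auto simp: zs'_def ns'_def masks_space_def noise_space_def fvecs_def PiE_iff
        extensional_restrict cong: restrict_cong)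
  show ?thesis
    unfolding translate colluders_view_def prod.case
  proof (rule restrict_ext)
    fix t assume t: "t \<in> Tc"
    have "(\<lambda>i\<in>{..<N} - {t}. enc_mask W d U T (zs' i) (ns' i) t) =
        (\<lambda>i\<in>{..<N} - {t}. enc_mask W d U T (zs i) (ns i) t)"
      using t by (intro restrict_ext) (simp add: enc)
    then show "(x' t, zs' t, ns' t, \<lambda>i\<in>{..<N} - {t}. enc_mask W d U T (zs' i) (ns' i) t) =
        (x t, zs t, ns t, \<lambda>i\<in>{..<N} - {t}. enc_mask W d U T (zs i) (ns i) t)"
      using own[OF t] agree t by simp
  qed
qed

lemma exists_compensating_shift:
  fixes W :: "'a::field mat" and x x' :: "nat \<Rightarrow> 'a fvec"
  assumes mds: "T_private_MDS W U N T" and TN: "T \<le> N" and dvd: "(U - T) dvd d"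
    and Tc: "Tc \<subseteq> {..<N}" "card Tc \<le> T"
    and sums: "\<forall>p<d. (\<Sum>i\<in>U1. x i p) = (\<Sum>i\<in>U1. x' i p)"
    and agree: "\<forall>t\<in>Tc. x t = x' t"
  shows "\<exists>a b. compensating_shift W d U T U1 Tc x x' a b"
proof -
  obtain noise_of where noise_of_W: "\<And>v t. t \<in> Tc \<Longrightarrow>
      (\<Sum>k<U-T. v k * W $$ (k, t)) = (\<Sum>k\<in>{U-T..<U}. noise_of v k * W $$ (k, t))"
    and noise_of_sum: "\<And>(I :: nat set) v k.
      noise_of (\<lambda>k'. \<Sum>i\<in>I. v i k') k = (\<Sum>i\<in>I. noise_of (v i) k)"
    and noise_of_0: "\<And>v k. \<forall>k'<U - T. v k' = 0 \<Longrightarrow> noise_of v k = 0"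
    by (rule T_private_MDS_noise_compensation[OF mds TN Tc]) (rule that)
  have TU: "T \<le> U" using mds by (simp add: T_private_MDS_def)
  define a where "a i p = x i p - x' i p" for i p
  define b where "b = (\<lambda>i k l. noise_of (\<lambda>k'. - a i (k' * sublen d U T + l)) k)"
  have "compensating_shift W d U T U1 Tc x x' a b"
    unfolding compensating_shift_def
  proof (intro conjI allI impI ballI)
    show "x' i p + a i p = x i p" for i p
      by (simp add: a_def)
    have zero: "\<forall>p<d. (\<Sum>i\<in>U1. a i p) = 0"
      using sums by (simp add: a_def sum_subtractf)
    show "(\<Sum>i\<in>U1. coeff d U T (a i) (b i) k l) = 0" if "k < U" "l < sublen d U T" for k l
      unfolding b_def
      by (rule compensated_coeff_sum_eq_0[OF noise_of_sum noise_of_0 dvd zero that(2)])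
    show "(\<Sum>k<U. coeff d U T (a i) (b i) k l * W $$ (k, t)) = 0" if "t \<in> Tc" for t i l
      unfolding b_def using noise_of_W[OF that] TU by (rule compensated_coeff_column_eq_0)
    show "a t = (\<lambda>_. 0)" "b t = (\<lambda>_ _. 0)" if "t \<in> Tc" for t
      using agree that by (simp_all add: a_def b_def fun_eq_iff noise_of_0)
  qed
  then show ?thesis by blast
qed

lemma rand_views_distribution_eq:
  fixes W :: "'a::{field,finite} mat"
  assumes mds: "T_private_MDS W U N T" and TN: "T \<le> N" and dvd: "(U - T) dvd d"
    and U1: "U1 \<subseteq> {..<N}" and Tc: "Tc \<subseteq> {..<N}" "card Tc \<le> T"
    and sums: "\<forall>p<d. (\<Sum>i\<in>U1. x i p) = (\<Sum>i\<in>U1. x' i p)"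
    and agree: "\<forall>t\<in>Tc. x t = x' t"
  shows "map_pmf (\<lambda>r. (server_view W N d U T U1 (x, r), colluders_view W N d U T Tc (x, r)))
      (rand_pmf N d U T) =
    map_pmf (\<lambda>r. (server_view W N d U T U1 (x', r), colluders_view W N d U T Tc (x', r)))
      (rand_pmf N d U T)"
proof -
  let ?views = "\<lambda>x r. (server_view W N d U T U1 (x, r), colluders_view W N d U T Tc (x, r))"
  obtain a b where shift: "compensating_shift W d U T U1 Tc x x' a b"
    using exists_compensating_shift[OF mds TN dvd Tc sums agree] by blast
  note views = server_view_translate_rand[OF dvd U1 shift]
    colluders_view_translate_rand[OF dvd Tc(1) _ _ shift agree]
  have "map_pmf (?views x') (rand_pmf N d U T) =
      map_pmf (?views x' \<circ> translate_rand N d U T a b) (rand_pmf N d U T)"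
    by (simp add: rand_pmf_translate flip: pmf.map_comp)
  also have "\<dots> = map_pmf (?views x) (rand_pmf N d U T)"
  proof (rule map_pmf_cong[OF refl])
    fix r :: "'a fvec fvec \<times> (nat \<Rightarrow> nat \<Rightarrow> 'a fvec)"
    assume "r \<in> set_pmf (rand_pmf N d U T)"
    then obtain zs ns where "r = (zs, ns)" "zs \<in> masks_space N d" "ns \<in> noise_space N d U T"
      by (auto simp: set_pmf_rand_pmf)
    then show "(?views x' \<circ> translate_rand N d U T a b) r = ?views x r"
      using views by simp
  qed
  finally show ?thesis by simp
qed

lemma lightsecagg_privateI:
  fixes W :: "'a::{field,finite} mat"
  assumes mds: "T_private_MDS W U N T" and TN: "T \<le> N" and dvd: "(U - T) dvd d"
  shows "lightsecagg_private W N d U T"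
  unfolding lightsecagg_private_def
proof (intro allI impI)
  fix PX :: "'a fvec fvec pmf" and U1 Tc :: "nat set"
  assume PX: "set_pmf PX \<subseteq> PiE {..<N} (\<lambda>_. fvecs d)" and U1: "U1 \<subseteq> {..<N}"
    and Tc: "Tc \<subseteq> {..<N}" "card Tc \<le> T"
  define total where "total x = (\<lambda>p\<in>{..<d}. \<Sum>i\<in>U1. x i p)" for x :: "'a fvec fvec"
  let ?Y = "server_view W N d U T U1"
  let ?Z = "\<lambda>\<omega>. ((\<lambda>p\<in>{..<d}. \<Sum>i\<in>U1. fst \<omega> i p), colluders_view W N d U T Tc \<omega>)"
  let ?h = "\<lambda>(s, c). (s, \<lambda>t\<in>Tc. fst (c t))"
  have fin: "finite (set_pmf PX)"
    using PX by (rule finite_subset) (auto simp: fvecs_def intro!: finite_PiE)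
  have determined: "?h (?Z (x, r)) = (total x, restrict x Tc)" for x r
    by (simp add: total_def colluders_view_def case_prod_unfold cong: restrict_cong)
  have invariant: "map_pmf (\<lambda>r. (?Y (x, r), ?Z (x, r))) (rand_pmf N d U T) =
      map_pmf (\<lambda>r. (?Y (x', r), ?Z (x', r))) (rand_pmf N d U T)"
    if "(total x, restrict x Tc) = (total x', restrict x' Tc)" for x x'
  proof -
    let ?cv = "\<lambda>x r. colluders_view W N d U T Tc (x, r)"
    have same_total: "total x = total x'" and "restrict x Tc = restrict x' Tc"
      using that by simp_all
    then have sums: "\<forall>p<d. (\<Sum>i\<in>U1. x i p) = (\<Sum>i\<in>U1. x' i p)" and agree: "\<forall>t\<in>Tc. x t = x' t"
      unfolding total_def by (metis lessThan_iff restrict_apply')+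
    have "map_pmf (\<lambda>r. (?Y (x, r), ?Z (x, r))) (rand_pmf N d U T) =
        map_pmf (\<lambda>(s, c). (s, total x, c)) (map_pmf (\<lambda>r. (?Y (x, r), ?cv x r)) (rand_pmf N d U T))"
      by (simp add: pmf.map_comp o_def total_def)
    also have "\<dots> =
        map_pmf (\<lambda>(s, c). (s, total x', c))
          (map_pmf (\<lambda>r. (?Y (x', r), ?cv x' r)) (rand_pmf N d U T))"
      by (simp only: rand_views_distribution_eq[OF mds TN dvd U1 Tc sums agree] same_total)
    also have "\<dots> = map_pmf (\<lambda>r. (?Y (x', r), ?Z (x', r))) (rand_pmf N d U T)"
      by (simp add: pmf.map_comp o_def total_def)
    finally show ?thesis .
  qed
  show "cond_mutual_info (pair_pmf PX (rand_pmf N d U T)) (\<lambda>\<omega>. fst \<omega>) ?Y ?Z = 0"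
    by (rule cond_mutual_info_pair_pmf_eq_0[where Y = ?Y and Z = ?Z and h = ?h
          and g = "\<lambda>x. (total x, restrict x Tc)", OF fin determined invariant])
qed

theorem theorem1:
  fixes W :: "'a::{field,finite} mat" and N T D U d :: nat
  assumes "N \<ge> 1"
    and "T + D < N"
    and "T < U" and "U \<le> N - D"
    and "(U - T) dvd d"
    and "T_private_MDS W U N T"
  shows "lightsecagg_private W N d U T \<and> lightsecagg_dropout_resilient W N d U T D"
proof
  show "lightsecagg_private W N d U T"
    using lightsecagg_privateI[OF assms(6) _ assms(5)] assms(2) by simp
  show "lightsecagg_dropout_resilient W N d U T D"
    using assms(6)
    by (intro lightsecagg_dropout_resilientI[OF assms(4,5)]) (simp add: T_private_MDS_def)
qed

end
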